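(* Let $y_0\in\mathbb{R}$, $b>0$, $\epsilon>0$, and let $f:[y_0,\infty)\to\mathbb{R}$ be such that $p:=1/f$ is well defined and twice differentiable on $[y_0,\infty)$, with $f(y_0)>0$, $f'(y)>0$ and $p''(y)>0$ for all $y\ge y_0$. Assume $b<\int_{y_0}^{\infty}p(y)\,dy$ (the integral may be $+\infty$). For $h>0$ and integers $N\ge 0$ put $\Sigma_{l,h,N}=\sum_{i=1}^{N}h\,p(y_0+hi)$. For each positive integer $j$ let $h^{(j)}=\epsilon/j$ and let $n_2^{(j)}$ be the smallest positive integer $N$ with $\Sigma_{l,h^{(j)},N}\ge b$, and assume that $n_2^{(1)}$ exists. Then for every positive integer $j$, $n_2^{(j)}$ exists and $$h^{(j)}\,n_2^{(j)}\le h^{(1)}\,n_2^{(1)}.$$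
   Context: $\Sigma_{l,h,N}$ is the lower rectangular (right-endpoint) sum for $\int_{y_0}^{y_0+hN}p(y)\,dy$ with step $h$; the empty sum ($N=0$) is $0$. The conditions on $f$ imply $f>0$, $p>0$ and $p$ strictly decreasing on $[y_0,\infty)$. *)

theory Defs
  imports "HOL-Analysis.Analysis"
begin

definition sigma_l :: "(real \<Rightarrow> real) \<Rightarrow> real \<Rightarrow> real \<Rightarrow> nat \<Rightarrow> real" where
  "sigma_l p y0 h N = (\<Sum>i=1..N. h * p (y0 + h * real i))"

definition n2 :: "(real \<Rightarrow> real) \<Rightarrow> real \<Rightarrow> real \<Rightarrow> real \<Rightarrow> nat" where
  "n2 p y0 b h = (LEAST N. N > 0 \<and> sigma_l p y0 h N \<ge> b)"

end

theory Submission
  imports Defs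
begin

text \<open>Only the antitonicity of \<open>p = 1/f\<close> on \<open>[y0,\<infinity>)\<close> matters. Refining the step from \<open>\<epsilon>\<close> to \<open>\<epsilon>/j\<close> splits each rectangle
  of width \<open>\<epsilon>\<close> into \<open>j\<close> rectangles whose right endpoints lie no further right, so for
  antitone \<open>p\<close> the refined sum over \<open>j N\<close> steps dominates the coarse sum over \<open>N\<close> steps.
  Hence \<open>j N\<close> with \<open>N = n2 p y0 b \<epsilon>\<close> is admissible for step \<open>\<epsilon>/j\<close>, and minimality gives the bound.\<close>

lemma mono_on_atLeast_if_has_real_derivative_nonneg:
  fixes f f' :: "real \<Rightarrow> real"
  assumes deriv: "\<And>y. y \<ge> y0 \<Longrightarrow> (f has_real_derivative f' y) (at y within {y0..})"
    and nonneg: "\<And>y. y \<ge> y0 \<Longrightarrow> f' y \<ge> 0"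
  shows "mono_on {y0..} f"
proof (rule monotone_onI)
  fix a c assume a: "a \<in> {y0..}" and "c \<in> {y0..}" and ac: "a \<le> c"
  have "(f has_derivative (\<lambda>h. f' x * h)) (at x within {a..c})" if "a \<le> x" "x \<le> c" for x
    using deriv[of x] a that unfolding has_field_derivative_def
    by (auto intro: has_derivative_subset)
  then obtain x where x: "x \<in> {a..c}" and mvt: "f c - f a = f' x * (c - a)"
    using mvt_very_simple[OF ac, of f "\<lambda>x. (*) (f' x)"] by auto
  have "0 \<le> f' x * (c - a)"
    using x a ac nonneg[of x] by simp
  then show "f a \<le> f c"
    using mvt by simp
qed

lemma antimono_on_inverse:
  fixes f :: "real \<Rightarrow> real"
  assumes "mono_on {y0..} f" and "f y0 > 0"
  shows "antimono_on {y0..} (\<lambda>x. 1 / f x)"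
proof (rule monotone_onI)
  fix a c assume "a \<in> {y0..}" "c \<in> {y0..}" "a \<le> c"
  then have "f y0 \<le> f a" "f a \<le> f c"
    using assms(1) by (auto intro: monotone_onD)
  then show "1 / f c \<le> 1 / f a"
    using assms(2) by (simp add: frac_le)
qed

lemma sigma_l_le_sigma_l_refined:
  assumes p: "antimono_on {y0..} p" and h: "h > 0" and j: "j > 0"
  shows "sigma_l p y0 h N \<le> sigma_l p y0 (h / real j) (j * N)"
proof (induction N)
  case 0
  then show ?case by (simp add: sigma_l_def)
next
  case (Suc N)
  define g where "g = (\<lambda>i::nat. h / real j * p (y0 + h / real j * real i))"
  have split: "sigma_l p y0 (h / real j) (j * Suc N)
      = sigma_l p y0 (h / real j) (j * N) + (\<Sum>i = j * N + 1..j * N + j. g i)"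
    unfolding sigma_l_def g_def
    using sum.ub_add_nat[of 1 "j * N" "\<lambda>i. h / real j * p (y0 + h / real j * real i)" j]
    by (simp add: algebra_simps)
  have "h / real j * p (y0 + h * real (Suc N)) \<le> g i" if i: "i \<in> {j * N + 1..j * N + j}" for i
  proof -
    have "real i \<le> real j * real (Suc N)"
      using i by (simp flip: of_nat_mult add: algebra_simps)
    then have "h / real j * real i \<le> h / real j * (real j * real (Suc N))"
      using h by (intro mult_left_mono) simp_all
    then have "h / real j * real i \<le> h * real (Suc N)"
      using j by simp
    moreover have "0 \<le> h / real j * real i"
      using h by simp
    ultimately have "p (y0 + h * real (Suc N)) \<le> p (y0 + h / real j * real i)"
      by (intro monotone_onD[OF p]) auto
    then show ?thesis
      unfolding g_def using h by (intro mult_left_mono) simp_all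
  qed
  then have "h * p (y0 + h * real (Suc N)) \<le> (\<Sum>i = j * N + 1..j * N + j. g i)"
    using sum_mono[of "{j * N + 1..j * N + j}" "\<lambda>_. h / real j * p (y0 + h * real (Suc N))" g] j
    by simp
  with Suc.IH split show ?case
    by (simp add: sigma_l_def)
qed

lemma n2_spec:
  assumes "\<exists>N. N > 0 \<and> sigma_l p y0 h N \<ge> b"
  shows "n2 p y0 b h > 0 \<and> sigma_l p y0 h (n2 p y0 b h) \<ge> b"
  unfolding n2_def using assms by (rule LeastI_ex)

lemma n2_le:
  assumes "N > 0" and "sigma_l p y0 h N \<ge> b"
  shows "n2 p y0 b h \<le> N"
  unfolding n2_def using assms by (blast intro: Least_le)

lemma n2_refined_le:
  assumes p: "antimono_on {y0..} p" and h: "h > 0" and j: "j > 0"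
    and ex: "\<exists>N. N > 0 \<and> sigma_l p y0 h N \<ge> b"
  shows "(\<exists>N. N > 0 \<and> sigma_l p y0 (h / real j) N \<ge> b)
    \<and> h / real j * real (n2 p y0 b (h / real j)) \<le> h * real (n2 p y0 b h)"
proof -
  define N where "N = n2 p y0 b h"
  have N: "N > 0" "sigma_l p y0 h N \<ge> b"
    using n2_spec[OF ex] by (simp_all add: N_def)
  have jN: "j * N > 0" "sigma_l p y0 (h / real j) (j * N) \<ge> b"
    using N j sigma_l_le_sigma_l_refined[OF p h j, of N] by auto
  then have "real (n2 p y0 b (h / real j)) \<le> real j * real N"
    using n2_le by (metis of_nat_le_iff of_nat_mult)
  then have "h / real j * real (n2 p y0 b (h / real j)) \<le> h / real j * (real j * real N)"
    using h by (intro mult_left_mono) simp_all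
  also have "\<dots> = h * real N"
    using j by simp
  finally show ?thesis
    using jN unfolding N_def by blast
qed

theorem lemma1:
  fixes f f' p' p'' :: "real \<Rightarrow> real" and y0 b \<epsilon> :: real
  assumes b_pos: "b > 0" and eps_pos: "\<epsilon> > 0"
    and f_nz: "\<And>y. y \<ge> y0 \<Longrightarrow> f y \<noteq> 0"
    and f_deriv: "\<And>y. y \<ge> y0 \<Longrightarrow> (f has_real_derivative f' y) (at y within {y0..})"
    and p_deriv: "\<And>y. y \<ge> y0 \<Longrightarrow> ((\<lambda>x. 1 / f x) has_real_derivative p' y) (at y within {y0..})"
    and p'_deriv: "\<And>y. y \<ge> y0 \<Longrightarrow> (p' has_real_derivative p'' y) (at y within {y0..})"
    and f_y0: "f y0 > 0"
    and f'_pos: "\<And>y. y \<ge> y0 \<Longrightarrow> f' y > 0"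
    and p''_pos: "\<And>y. y \<ge> y0 \<Longrightarrow> p'' y > 0"
    and integral: "ennreal b < (\<integral>\<^sup>+ y\<in>{y0..}. ennreal (1 / f y) \<partial>lborel)"
    and exists1: "\<exists>N::nat. N > 0 \<and> sigma_l (\<lambda>x. 1 / f x) y0 \<epsilon> N \<ge> b"
  shows "\<forall>j::nat. j > 0 \<longrightarrow>
           (\<exists>N::nat. N > 0 \<and> sigma_l (\<lambda>x. 1 / f x) y0 (\<epsilon> / real j) N \<ge> b) \<and>
           (\<epsilon> / real j) * real (n2 (\<lambda>x. 1 / f x) y0 b (\<epsilon> / real j))
             \<le> \<epsilon> * real (n2 (\<lambda>x. 1 / f x) y0 b \<epsilon>)"
proof (intro allI impI)
  fix j :: nat assume "j > 0"
  have "mono_on {y0..} f"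
    using f_deriv f'_pos by (intro mono_on_atLeast_if_has_real_derivative_nonneg) (auto intro: less_imp_le)
  then have "antimono_on {y0..} (\<lambda>x. 1 / f x)"
    using f_y0 by (rule antimono_on_inverse)
  then show "(\<exists>N::nat. N > 0 \<and> sigma_l (\<lambda>x. 1 / f x) y0 (\<epsilon> / real j) N \<ge> b) \<and>
      (\<epsilon> / real j) * real (n2 (\<lambda>x. 1 / f x) y0 b (\<epsilon> / real j))
        \<le> \<epsilon> * real (n2 (\<lambda>x. 1 / f x) y0 b \<epsilon>)"
    using eps_pos \<open>j > 0\<close> exists1 by (rule n2_refined_le)
qed

end
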